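(* Let $k\ge1$. For every integer $m\ge1$ and every $z\in\mathbb{C}P^k\setminus\mathbb{R}P^k$, $$M^m_{\mathbb{C}P^k}(z)\le\frac{4\,m!\,(k+1)}{1-\|\tau(z)\|}.$$
   Context: Equip $\mathcal O_{\mathbb{C}P^k}(1)$ with its standard Hermitian metric, so that a linear form $\sigma$ has pointwise norm $\|\sigma(z)\|=|\sigma(z)|/|z|$, and $\mathcal O(2)$ with the induced metric. The space $\mathbb{R}H^0(\mathbb{C}P^k,\mathcal O(1))$ of real linear forms carries the Euclidean structure for which $\sigma_i(z)=\sqrt{k+1}\,z_i$, $i=0,\dots,k$, is an orthonormal basis (this is the $L^2$ product for the normalized Fubini–Study volume), and $\mu$ is the Gaussian measure: for $\sigma_a=\sum a_i\sigma_i$, $a\in\mathbb{R}^{k+1}$ has density $\pi^{-(k+1)/2}e^{-|a|^2}$. Define $M^m_{\mathbb{C}P^k}(z)=\int|\log\|\sigma(z)\|^2|^m\,d\mu(\sigma)$. Let $\tau$ be the section of $\mathcal O(2)$ given by $\tau(z)=z_0^2+\dots+z_k^2$, so $\|\tau(z)\|=|z_0^2+\dots+z_k^2|/|z|^2$. *)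

theory Defs
  imports "HOL-Analysis.Analysis"
begin

text \<open>Homogeneous coordinates: a point of CP^k is represented by a nonzero vector
  z in C^(k+1), with k+1 = CARD('n).\<close>

definition lin_form :: "real^'n \<Rightarrow> complex^'n \<Rightarrow> complex" where
  "lin_form a z = (\<Sum>i\<in>UNIV. complex_of_real (a$i) * complex_of_real (sqrt (real CARD('n))) * z$i)"

text \<open>Pointwise norm of a section of O(1): |sigma(z)| / |z|.\<close>
definition sec_norm :: "real^'n \<Rightarrow> complex^'n \<Rightarrow> real" where
  "sec_norm a z = cmod (lin_form a z) / norm z"

definition gauss_density :: "real^'n \<Rightarrow> real" where
  "gauss_density a = pi powr (- (real CARD('n) / 2)) * exp (- ((norm a)^2))"

definition M_CP :: "nat \<Rightarrow> complex^'n \<Rightarrow> ennreal" where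
  "M_CP m z = (\<integral>\<^sup>+ a. ennreal (gauss_density a * \<bar>ln ((sec_norm a z)^2)\<bar> ^ m) \<partial>lborel)"

definition tau_norm :: "complex^'n \<Rightarrow> real" where
  "tau_norm z = cmod (\<Sum>i\<in>UNIV. (z$i)^2) / (norm z)^2"

definition real_point :: "complex^'n \<Rightarrow> bool" where
  "real_point z \<longleftrightarrow> (\<exists>c::complex. \<exists>x::real^'n. z = c *s (\<chi> i. complex_of_real (x$i)))"

end

theory Submission
  imports Defs "HOL-Probability.Probability"
begin

(*
  Write z = x + iy with x, y real and \<kappa> = (k+1)/|z|^2. Under \<mu> the coefficients a are i.i.d.
  with density exp(-s^2)/sqrt \<pi>, and ||\<sigma>_a(z)||^2 = \<kappa>(<a,x>^2 + <a,y>^2).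
  Split |ln t|^m \<le> m! t + (-ln t)^m 1_(0,1](t). The first term has expectation
  m! \<kappa> (|x|^2 + |y|^2)/2 = m!(k+1)/2. For the second, integrate out two coordinates i, j:
  the product of their densities is at most 1/\<pi>, the linear change of variables has Jacobian
  D = x_i y_j - x_j y_i, and the integral of (-ln \<kappa>(u^2+v^2))^m over the disc
  \<kappa>(u^2+v^2) \<le> 1 is at most 4 m!/\<kappa>. By Lagrange's identity the largest minor satisfies
  (k+1)^2 D^2 \<ge> 2G, where G = |x|^2|y|^2 - <x,y>^2 is positive off RP^k and
  4G = |z|^4 (1 - ||\<tau>(z)||^2); this turns D into the factor 1/(1 - ||\<tau>(z)||).
*)

definition gauss :: "real \<Rightarrow> real" where
  "gauss s = exp (- s\<^sup>2) / sqrt pi"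

lemma gauss_eq_normal_density: "gauss = normal_density 0 (1 / sqrt 2)"
  by (auto simp: fun_eq_iff gauss_def normal_density_def power_divide real_sqrt_divide)

lemma gauss_nonneg [simp]: "0 \<le> gauss s"
  by (simp add: gauss_def)

lemma gauss_le: "gauss s \<le> 1 / sqrt pi"
  by (simp add: gauss_def divide_right_mono)

lemma gauss_mult_gauss_le: "gauss s * gauss t \<le> 1 / pi"
proof -
  have "gauss s * gauss t \<le> (1 / sqrt pi) * (1 / sqrt pi)"
    by (intro mult_mono gauss_le) auto
  then show ?thesis by simp
qed

lemma borel_measurable_gauss [measurable]: "gauss \<in> borel_measurable borel"
  unfolding gauss_def by measurable

lemma nn_integral_gauss: "(\<integral>\<^sup>+ s. ennreal (gauss s) \<partial>lborel) = 1"
  unfolding gauss_eq_normal_density by (subst nn_integral_eq_integral) auto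

lemma nn_integral_gauss_affine_sq:
  "(\<integral>\<^sup>+ s. ennreal (gauss s * (c + s * p)\<^sup>2) \<partial>lborel) = ennreal (c\<^sup>2 + p\<^sup>2 / 2)"
proof -
  have "has_bochner_integral lborel (\<lambda>s. c\<^sup>2 * gauss s + (2 * c * p) * (gauss s * s) + p\<^sup>2 * (gauss s * s\<^sup>2))
     (c\<^sup>2 * 1 + (2 * c * p) * 0 + p\<^sup>2 * (1 / 2))"
    unfolding gauss_eq_normal_density
    using normal_moment_nz_1[where \<mu>=0 and \<sigma>="1/sqrt 2"]
      normal_moment_even[where k=1 and \<mu>=0 and \<sigma>="1/sqrt 2"]
    by (intro has_bochner_integral_add has_bochner_integral_mult_right)
       (auto simp: has_bochner_integral_iff power2_eq_square)
  moreover have "(\<lambda>s. c\<^sup>2 * gauss s + (2 * c * p) * (gauss s * s) + p\<^sup>2 * (gauss s * s\<^sup>2))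
      = (\<lambda>s. gauss s * (c + s * p)\<^sup>2)"
    by (auto simp: fun_eq_iff power2_eq_square algebra_simps)
  ultimately show ?thesis
    by (subst nn_integral_eq_integral) (auto simp: has_bochner_integral_iff)
qed

interpretation lborel_product: product_sigma_finite "\<lambda>_. lborel :: real measure"
  by standard

lemma nn_integral_gauss_PiM_affine_sq:
  assumes "finite I"
  shows "(\<integral>\<^sup>+ f. ennreal ((\<Prod>l\<in>I. gauss (f l)) * (c + (\<Sum>l\<in>I. f l * p l))\<^sup>2) \<partial>PiM I (\<lambda>_. lborel))
     = ennreal (c\<^sup>2 + (\<Sum>l\<in>I. (p l)\<^sup>2) / 2)"
  using assms
proof (induction I arbitrary: c rule: finite_induct)
  case empty
  show ?case by (simp add: PiM_empty nn_integral_count_space_finite)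
next
  case (insert i I)
  let ?G = "\<lambda>x. \<Prod>l\<in>I. gauss (x l)" and ?P = "\<lambda>x. \<Sum>l\<in>I. x l * p l"
  have split: "(\<Prod>l\<in>insert i I. gauss ((x(i:=y)) l)) * (c + (\<Sum>l\<in>insert i I. (x(i:=y)) l * p l))\<^sup>2
      = gauss y * (?G x * ((c + y * p i) + ?P x)\<^sup>2)" for x y
  proof -
    have "(\<Prod>l\<in>I. gauss ((x(i:=y)) l)) = ?G x" "(\<Sum>l\<in>I. (x(i:=y)) l * p l) = ?P x"
      using insert by (auto intro!: prod.cong sum.cong)
    then show ?thesis using insert by (simp add: algebra_simps)
  qed
  have "(\<integral>\<^sup>+ f. ennreal ((\<Prod>l\<in>insert i I. gauss (f l)) * (c + (\<Sum>l\<in>insert i I. f l * p l))\<^sup>2) \<partial>PiM (insert i I) (\<lambda>_. lborel))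
    = (\<integral>\<^sup>+ y. \<integral>\<^sup>+ x. ennreal (gauss y) * ennreal (?G x * ((c + y * p i) + ?P x)\<^sup>2) \<partial>PiM I (\<lambda>_. lborel) \<partial>lborel)"
    using insert
    by (subst lborel_product.product_nn_integral_insert_rev)
       (simp_all only: split ennreal_mult'[OF gauss_nonneg], auto)
  also have "\<dots> = (\<integral>\<^sup>+ y. ennreal (gauss y) * ennreal ((c + y * p i)\<^sup>2 + (\<Sum>l\<in>I. (p l)\<^sup>2) / 2) \<partial>lborel)"
    by (intro nn_integral_cong) (simp add: nn_integral_cmult insert.IH)
  also have "\<dots> = (\<integral>\<^sup>+ y. ennreal (gauss y * (c + y * p i)\<^sup>2) + ennreal (gauss y) * ennreal ((\<Sum>l\<in>I. (p l)\<^sup>2) / 2) \<partial>lborel)"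
    by (intro nn_integral_cong)
       (simp add: ennreal_mult'[symmetric] sum_nonneg algebra_simps flip: ennreal_plus)
  also have "\<dots> = ennreal (c\<^sup>2 + (p i)\<^sup>2 / 2) + ennreal ((\<Sum>l\<in>I. (p l)\<^sup>2) / 2)"
    by (subst nn_integral_add) (auto simp: nn_integral_gauss_affine_sq nn_integral_multc nn_integral_gauss)
  also have "\<dots> = ennreal (c\<^sup>2 + (\<Sum>l\<in>insert i I. (p l)\<^sup>2) / 2)"
    using insert by (simp add: sum_nonneg add_divide_distrib flip: ennreal_plus)
  finally show ?case .
qed

definition neg_ln_pow :: "nat \<Rightarrow> real \<Rightarrow> real" where
  "neg_ln_pow m y = (if 0 < y \<and> y \<le> 1 then (- ln y) ^ m else 0)"

lemma neg_ln_pow_nonneg [simp]: "0 \<le> neg_ln_pow m y"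
  by (simp add: neg_ln_pow_def)

lemma borel_measurable_neg_ln_pow [measurable]: "neg_ln_pow m \<in> borel_measurable borel"
  unfolding neg_ln_pow_def by measurable

lemma neg_ln_pow_antimono: "0 < y' \<Longrightarrow> y' \<le> y \<Longrightarrow> neg_ln_pow m y \<le> neg_ln_pow m y'"
  by (auto simp: neg_ln_pow_def intro!: power_mono)

fun neg_ln_pow_primitive :: "nat \<Rightarrow> real \<Rightarrow> real" where
  "neg_ln_pow_primitive 0 w = w"
| "neg_ln_pow_primitive (Suc m) w = w * (- ln w) ^ Suc m + real (Suc m) * neg_ln_pow_primitive m w"

lemma neg_ln_pow_primitive_deriv:
  "0 < w \<Longrightarrow> (neg_ln_pow_primitive m has_real_derivative (- ln w) ^ m) (at w)"
proof (induction m)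
  case 0
  then show ?case by (auto intro!: derivative_eq_intros)
next
  case (Suc m)
  have "((\<lambda>w. - ln w) has_real_derivative - (1 / w)) (at w)"
    using Suc.prems by (auto intro!: derivative_eq_intros)
  from DERIV_power[OF this, of "Suc m"]
  have "((\<lambda>w. (- ln w) ^ Suc m) has_real_derivative of_nat (Suc m) * (- (1 / w) * (- ln w) ^ m)) (at w)"
    by simp
  from DERIV_add[OF DERIV_mult[OF DERIV_ident this] DERIV_cmult[OF Suc.IH[OF Suc.prems]]]
  have "((\<lambda>w. w * (- ln w) ^ Suc m + real (Suc m) * neg_ln_pow_primitive m w)
      has_real_derivative (- ln w) ^ Suc m) (at w)"
    by (rule DERIV_cong) (use Suc.prems in \<open>simp add: field_simps\<close>)
  then show ?case by simp
qed

lemma neg_ln_pow_primitive_1: "neg_ln_pow_primitive m 1 = fact m"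
  by (induction m) auto

lemma neg_ln_pow_primitive_nonneg:
  assumes "0 < w" "w \<le> 1"
  shows "0 \<le> neg_ln_pow_primitive m w"
proof -
  have "0 \<le> - ln w" using assms by simp
  then show ?thesis
    using assms by (induction m) (auto simp del: power_Suc)
qed

lemma nn_integral_neg_ln_pow_le: "(\<integral>\<^sup>+ w. ennreal (neg_ln_pow m w) \<partial>lborel) \<le> ennreal (fact m)"
proof -
  define f where "f k w = ennreal ((- ln w) ^ m) * indicator {1 / Suc k .. 1} w" for k w
  have "(\<lambda>k. integral\<^sup>N lborel (f k)) \<longlonglongrightarrow> (\<integral>\<^sup>+ w. ennreal (neg_ln_pow m w) \<partial>lborel)"
  proof (rule nn_integral_LIMSEQ)
    show "incseq f"
    proof (intro incseq_SucI le_funI)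
      fix k w
      have "1 / real (Suc (Suc k)) \<le> 1 / Suc k" by (simp add: frac_le)
      then show "f k w \<le> f (Suc k) w" by (auto simp: f_def split: split_indicator)
    qed
    show "(\<lambda>k. f k w) \<longlonglongrightarrow> ennreal (neg_ln_pow m w)" for w
    proof (cases "0 < w \<and> w \<le> 1")
      case True
      obtain N where N: "1 / w < real N" using reals_Archimedean2 by blast
      have "f k w = ennreal (neg_ln_pow m w)" if "N \<le> k" for k
      proof -
        have "1 / w < Suc k" using N that by linarith
        then have "1 / Suc k \<le> w" using True by (simp add: field_simps)
        then show ?thesis using True by (simp add: f_def neg_ln_pow_def)
      qed
      then show ?thesis by (intro tendsto_eventually eventually_sequentiallyI)
    next
      case False
      have "f k w = 0" for k
        using False by (auto simp: f_def indicator_def intro: less_le_trans[of 0 "1 / real (Suc k)"])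
      then show ?thesis using False by (auto simp: neg_ln_pow_def)
    qed
  qed (unfold f_def, measurable)
  moreover have "integral\<^sup>N lborel (f k) \<le> ennreal (fact m)" for k
  proof -
    have "integral\<^sup>N lborel (f k)
        = ennreal (neg_ln_pow_primitive m 1 - neg_ln_pow_primitive m (1 / Suc k))"
      unfolding f_def
    proof (rule nn_integral_FTC_Icc)
      fix w :: real assume "w \<in> {1 / Suc k .. 1}"
      then have "0 < w" "w \<le> 1"
        by (auto intro: less_le_trans[of 0 "1 / real (Suc k)"])
      then show "(neg_ln_pow_primitive m has_real_derivative (- ln w) ^ m) (at w)"
        and "0 \<le> (- ln w) ^ m"
        by (auto intro: neg_ln_pow_primitive_deriv)
    qed (auto simp: divide_le_eq)
    also have "\<dots> \<le> ennreal (fact m)"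
      using neg_ln_pow_primitive_nonneg[of "1 / Suc k" m]
      by (intro ennreal_leI) (auto simp: neg_ln_pow_primitive_1 divide_le_eq)
    finally show ?thesis .
  qed
  ultimately show ?thesis by (intro LIMSEQ_le_const2) auto
qed

lemma nn_integral_neg_ln_pow_sq_half_line_le:
  assumes "0 < \<kappa>"
  shows "(\<integral>\<^sup>+ u. ennreal (2 * u * neg_ln_pow m (\<kappa> * u\<^sup>2)) * indicator {0 .. 1 / sqrt \<kappa>} u \<partial>lborel)
    \<le> ennreal (fact m / \<kappa>)"
proof -
  define b where "b = 1 / sqrt \<kappa>"
  have b: "0 < b" "\<kappa> * b\<^sup>2 = 1"
    using assms by (auto simp: b_def power_divide)
  have "ennreal \<kappa> * (\<integral>\<^sup>+ u. ennreal (2 * u * neg_ln_pow m (\<kappa> * u\<^sup>2)) * indicator {0..b} u \<partial>lborel)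
      = (\<integral>\<^sup>+ u. ennreal (neg_ln_pow m (\<kappa> * u\<^sup>2) * (2 * \<kappa> * u) * indicator {0..b} u) \<partial>lborel)"
    using assms
    by (subst nn_integral_cmult[symmetric]) (auto intro!: nn_integral_cong
        simp: ennreal_mult'[symmetric] mult_ac split: split_indicator)
  also have "\<dots> = (\<integral>\<^sup>+ w. ennreal (neg_ln_pow m w * indicator {\<kappa> * 0\<^sup>2 .. \<kappa> * b\<^sup>2} w) \<partial>lborel)"
    using b assms
    by (intro nn_integral_substitution[symmetric, where f="neg_ln_pow m" and g="\<lambda>u. \<kappa> * u\<^sup>2"
          and g'="\<lambda>u. 2 * \<kappa> * u" and a=0 and b=b])
       (auto intro!: derivative_eq_intros continuous_intros simp: set_borel_measurable_def)
  also have "\<dots> \<le> (\<integral>\<^sup>+ w. ennreal (neg_ln_pow m w) \<partial>lborel)"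
    by (intro nn_integral_mono) (simp split: split_indicator)
  also have "\<dots> \<le> ennreal (fact m)"
    by (rule nn_integral_neg_ln_pow_le)
  finally have "ennreal (1 / \<kappa>) * (ennreal \<kappa> * (\<integral>\<^sup>+ u. ennreal (2 * u * neg_ln_pow m (\<kappa> * u\<^sup>2)) * indicator {0..b} u \<partial>lborel))
      \<le> ennreal (1 / \<kappa>) * ennreal (fact m)"
    by (rule mult_left_mono) simp
  moreover have "ennreal (1 / \<kappa>) * ennreal (fact m) = ennreal (fact m / \<kappa>)"
    using assms by (subst ennreal_mult'[symmetric]) auto
  ultimately show ?thesis
    using assms unfolding b_def[symmetric] by (simp add: mult.assoc[symmetric] ennreal_mult'[symmetric])
qed

lemma nn_integral_neg_ln_pow_sq_le:
  assumes "0 < \<kappa>"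
  shows "(\<integral>\<^sup>+ u. ennreal (2 * \<bar>u\<bar> * neg_ln_pow m (\<kappa> * u\<^sup>2)) \<partial>lborel) \<le> ennreal (2 * fact m / \<kappa>)"
proof -
  define h where "h u = ennreal (2 * u * neg_ln_pow m (\<kappa> * u\<^sup>2)) * indicator {0 .. 1 / sqrt \<kappa>} u" for u
  have [measurable]: "h \<in> borel_measurable borel"
    unfolding h_def by measurable
  have "neg_ln_pow m (\<kappa> * u\<^sup>2) = 0" if "1 / sqrt \<kappa> < \<bar>u\<bar>" for u
  proof -
    have "\<kappa> * (1 / sqrt \<kappa>)\<^sup>2 < \<kappa> * \<bar>u\<bar>\<^sup>2"
      using assms that by (intro mult_strict_left_mono power_strict_mono) auto
    then show ?thesis using assms by (simp add: neg_ln_pow_def power_divide)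
  qed
  then have split: "ennreal (2 * \<bar>u\<bar> * neg_ln_pow m (\<kappa> * u\<^sup>2)) = h u + h (0 + (-1) * u)" for u
    by (cases "0 \<le> u"; cases "\<bar>u\<bar> \<le> 1 / sqrt \<kappa>") (auto simp: h_def indicator_def)
  have "(\<integral>\<^sup>+ u. ennreal (2 * \<bar>u\<bar> * neg_ln_pow m (\<kappa> * u\<^sup>2)) \<partial>lborel)
      = (\<integral>\<^sup>+ u. h u \<partial>lborel) + (\<integral>\<^sup>+ u. h (0 + (-1) * u) \<partial>lborel)"
    unfolding split by (rule nn_integral_add) auto
  also have "(\<integral>\<^sup>+ u. h (0 + (-1) * u) \<partial>lborel) = (\<integral>\<^sup>+ u. h u \<partial>lborel)"
    using nn_integral_real_affine[of h "-1" 0] by simp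
  also have "(\<integral>\<^sup>+ u. h u \<partial>lborel) + (\<integral>\<^sup>+ u. h u \<partial>lborel) \<le> ennreal (fact m / \<kappa>) + ennreal (fact m / \<kappa>)"
    unfolding h_def by (intro add_mono nn_integral_neg_ln_pow_sq_half_line_le assms)
  also have "\<dots> = ennreal (2 * fact m / \<kappa>)"
    using assms by (simp flip: ennreal_plus)
  finally show ?thesis .
qed

lemma nn_integral_plane_neg_ln_pow_le:
  assumes "0 < \<kappa>"
  shows "(\<integral>\<^sup>+ u. \<integral>\<^sup>+ v. ennreal (neg_ln_pow m (\<kappa> * (u\<^sup>2 + v\<^sup>2))) \<partial>lborel \<partial>lborel) \<le> ennreal (4 * fact m / \<kappa>)"
proof -
  define A where "A u v = ennreal (neg_ln_pow m (\<kappa> * u\<^sup>2)) * (if \<bar>v\<bar> \<le> \<bar>u\<bar> then 1 else 0)" for u v :: real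
  have [measurable]: "case_prod A \<in> borel_measurable (lborel \<Otimes>\<^sub>M lborel)"
    unfolding A_def by measurable
  \<comment> \<open>Where |v| \<le> |u| the integrand is dominated by its value at v = 0.\<close>
  have "ennreal (neg_ln_pow m (\<kappa> * (u\<^sup>2 + v\<^sup>2))) \<le> A u v + A v u" for u v
  proof (cases "\<bar>v\<bar> \<le> \<bar>u\<bar>")
    case True
    then have "neg_ln_pow m (\<kappa> * (u\<^sup>2 + v\<^sup>2)) \<le> neg_ln_pow m (\<kappa> * u\<^sup>2)"
    proof (cases "u = 0")
      case False
      then show ?thesis using assms by (intro neg_ln_pow_antimono) auto
    qed (use True in simp)
    then show ?thesis
      using True by (auto simp: A_def intro: add_increasing2)
  next
    case False
    then have "neg_ln_pow m (\<kappa> * (u\<^sup>2 + v\<^sup>2)) \<le> neg_ln_pow m (\<kappa> * v\<^sup>2)"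
      using assms by (intro neg_ln_pow_antimono) auto
    then show ?thesis
      using False by (auto simp: A_def intro: add_increasing)
  qed
  then have "(\<integral>\<^sup>+ u. \<integral>\<^sup>+ v. ennreal (neg_ln_pow m (\<kappa> * (u\<^sup>2 + v\<^sup>2))) \<partial>lborel \<partial>lborel)
      \<le> (\<integral>\<^sup>+ u. \<integral>\<^sup>+ v. A u v + A v u \<partial>lborel \<partial>lborel)"
    by (intro nn_integral_mono)
  also have "\<dots> = (\<integral>\<^sup>+ u. \<integral>\<^sup>+ v. A u v \<partial>lborel \<partial>lborel) + (\<integral>\<^sup>+ u. \<integral>\<^sup>+ v. A v u \<partial>lborel \<partial>lborel)"
    by (subst nn_integral_add[symmetric]) (auto intro!: nn_integral_cong nn_integral_add)
  also have "(\<integral>\<^sup>+ u. \<integral>\<^sup>+ v. A v u \<partial>lborel \<partial>lborel) = (\<integral>\<^sup>+ u. \<integral>\<^sup>+ v. A u v \<partial>lborel \<partial>lborel)"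
    by (rule lborel_pair.Fubini') measurable
  also have "(\<integral>\<^sup>+ u. \<integral>\<^sup>+ v. A u v \<partial>lborel \<partial>lborel)
      = (\<integral>\<^sup>+ u. ennreal (2 * \<bar>u\<bar> * neg_ln_pow m (\<kappa> * u\<^sup>2)) \<partial>lborel)"
  proof (intro nn_integral_cong)
    fix u :: real
    have "(\<integral>\<^sup>+ v. A u v \<partial>lborel) = (\<integral>\<^sup>+ v. ennreal (neg_ln_pow m (\<kappa> * u\<^sup>2)) * indicator {- \<bar>u\<bar> .. \<bar>u\<bar>} v \<partial>lborel)"
      by (intro nn_integral_cong) (auto simp: A_def indicator_def)
    also have "\<dots> = ennreal (neg_ln_pow m (\<kappa> * u\<^sup>2)) * ennreal (2 * \<bar>u\<bar>)"
      by (subst nn_integral_cmult_indicator) auto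
    finally show "(\<integral>\<^sup>+ v. A u v \<partial>lborel) = ennreal (2 * \<bar>u\<bar> * neg_ln_pow m (\<kappa> * u\<^sup>2))"
      by (simp add: ennreal_mult'[symmetric] mult_ac)
  qed
  also have "\<dots> + \<dots> \<le> ennreal (2 * fact m / \<kappa>) + ennreal (2 * fact m / \<kappa>)"
    using assms by (intro add_mono nn_integral_neg_ln_pow_sq_le)
  also have "\<dots> = ennreal (4 * fact m / \<kappa>)"
    using assms by (simp flip: ennreal_plus)
  finally show ?thesis .
qed

lemma nn_integral_plane_linear_change:
  fixes F :: "real \<Rightarrow> real \<Rightarrow> ennreal"
  assumes [measurable]: "case_prod F \<in> borel_measurable (lborel \<Otimes>\<^sub>M lborel)"
    and a: "a \<noteq> 0" and det: "a * d - b * c \<noteq> 0"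
  shows "ennreal \<bar>a * d - b * c\<bar> * (\<integral>\<^sup>+ t. \<integral>\<^sup>+ s. F (a * s + b * t + h) (c * s + d * t + k) \<partial>lborel \<partial>lborel)
     = (\<integral>\<^sup>+ u. \<integral>\<^sup>+ v. F u v \<partial>lborel \<partial>lborel)"
proof -
  define e1 where "e1 = (a * d - b * c) / a"
  define e2 where "e2 x = c * (x - h) / a + k" for x
  have e1: "e1 \<noteq> 0" using a det by (simp add: e1_def)
  have [measurable]: "(\<lambda>(x, t). F x (e1 * t + e2 x)) \<in> borel_measurable (lborel \<Otimes>\<^sub>M lborel)"
    unfolding e2_def by measurable
  have inner_s: "(\<integral>\<^sup>+ x. F x (e1 * t + e2 x) \<partial>lborel)
      = ennreal \<bar>a\<bar> * (\<integral>\<^sup>+ s. F (a * s + b * t + h) (c * s + d * t + k) \<partial>lborel)" for t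
  proof -
    have "(\<integral>\<^sup>+ x. F x (e1 * t + e2 x) \<partial>lborel)
        = ennreal \<bar>a\<bar> * (\<integral>\<^sup>+ s. F (b * t + h + a * s) (e1 * t + e2 (b * t + h + a * s)) \<partial>lborel)"
      by (rule nn_integral_real_affine[OF _ a]) measurable
    also have "(\<lambda>s. F (b * t + h + a * s) (e1 * t + e2 (b * t + h + a * s)))
        = (\<lambda>s. F (a * s + b * t + h) (c * s + d * t + k))"
      using a by (auto simp: fun_eq_iff e1_def e2_def field_simps intro!: arg_cong2[where f=F])
    finally show ?thesis .
  qed
  have inner_v: "(\<integral>\<^sup>+ v. F x v \<partial>lborel) = ennreal \<bar>e1\<bar> * (\<integral>\<^sup>+ t. F x (e1 * t + e2 x) \<partial>lborel)" for x
    using nn_integral_real_affine[OF _ e1, of "F x" "e2 x"] by (simp add: add.commute)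
  have "ennreal \<bar>a * d - b * c\<bar> * (\<integral>\<^sup>+ t. \<integral>\<^sup>+ s. F (a * s + b * t + h) (c * s + d * t + k) \<partial>lborel \<partial>lborel)
     = ennreal \<bar>e1\<bar> * (ennreal \<bar>a\<bar> * (\<integral>\<^sup>+ t. \<integral>\<^sup>+ s. F (a * s + b * t + h) (c * s + d * t + k) \<partial>lborel \<partial>lborel))"
    using a by (simp add: e1_def abs_divide mult.assoc[symmetric] ennreal_mult'[symmetric])
  also have "ennreal \<bar>a\<bar> * (\<integral>\<^sup>+ t. \<integral>\<^sup>+ s. F (a * s + b * t + h) (c * s + d * t + k) \<partial>lborel \<partial>lborel)
     = (\<integral>\<^sup>+ t. \<integral>\<^sup>+ x. F x (e1 * t + e2 x) \<partial>lborel \<partial>lborel)"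
    by (subst nn_integral_cmult[symmetric]) (simp_all add: inner_s)
  also have "\<dots> = (\<integral>\<^sup>+ x. \<integral>\<^sup>+ t. F x (e1 * t + e2 x) \<partial>lborel \<partial>lborel)"
    by (rule lborel_pair.Fubini') measurable
  also have "ennreal \<bar>e1\<bar> * \<dots> = (\<integral>\<^sup>+ u. \<integral>\<^sup>+ v. F u v \<partial>lborel \<partial>lborel)"
    by (subst nn_integral_cmult[symmetric]) (simp_all add: inner_v)
  finally show ?thesis .
qed

lemma nn_integral_gauss_pair_neg_ln_pow_le:
  assumes a: "a \<noteq> 0" and det: "a * d - b * c \<noteq> 0" and \<kappa>: "0 < \<kappa>"
  shows "(\<integral>\<^sup>+ t. \<integral>\<^sup>+ s. ennreal (gauss s * gauss t *
      neg_ln_pow m (\<kappa> * ((a * s + b * t + h)\<^sup>2 + (c * s + d * t + k)\<^sup>2))) \<partial>lborel \<partial>lborel)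
    \<le> ennreal (4 * fact m / (pi * \<kappa> * \<bar>a * d - b * c\<bar>))"
proof -
  define H where "H u v = ennreal (neg_ln_pow m (\<kappa> * (u\<^sup>2 + v\<^sup>2)))" for u v
  have [measurable]: "case_prod H \<in> borel_measurable (lborel \<Otimes>\<^sub>M lborel)"
    unfolding H_def by measurable
  define D where "D = \<bar>a * d - b * c\<bar>"
  have D: "0 < D" using det by (simp add: D_def)
  have "(\<integral>\<^sup>+ t. \<integral>\<^sup>+ s. ennreal (gauss s * gauss t *
      neg_ln_pow m (\<kappa> * ((a * s + b * t + h)\<^sup>2 + (c * s + d * t + k)\<^sup>2))) \<partial>lborel \<partial>lborel)
    \<le> (\<integral>\<^sup>+ t. \<integral>\<^sup>+ s. ennreal (1 / (pi * D)) * (ennreal D * H (a * s + b * t + h) (c * s + d * t + k)) \<partial>lborel \<partial>lborel)"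
    using D mult_right_mono[OF gauss_mult_gauss_le neg_ln_pow_nonneg]
    by (intro nn_integral_mono) (simp add: H_def mult.assoc[symmetric] ennreal_mult'[symmetric])
  also have "\<dots> = ennreal (1 / (pi * D)) * (ennreal D *
      (\<integral>\<^sup>+ t. \<integral>\<^sup>+ s. H (a * s + b * t + h) (c * s + d * t + k) \<partial>lborel \<partial>lborel))"
    by (simp add: nn_integral_cmult)
  also have "ennreal D * (\<integral>\<^sup>+ t. \<integral>\<^sup>+ s. H (a * s + b * t + h) (c * s + d * t + k) \<partial>lborel \<partial>lborel)
      = (\<integral>\<^sup>+ u. \<integral>\<^sup>+ v. H u v \<partial>lborel \<partial>lborel)"
    unfolding D_def by (rule nn_integral_plane_linear_change) (use a det in auto)
  also have "\<dots> \<le> ennreal (4 * fact m / \<kappa>)"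
    unfolding H_def by (rule nn_integral_plane_neg_ln_pow_le[OF \<kappa>])
  also have "ennreal (1 / (pi * D)) * ennreal (4 * fact m / \<kappa>) = ennreal (4 * fact m / (pi * \<kappa> * D))"
    using D by (simp add: ennreal_mult'[symmetric] field_simps)
  finally show ?thesis
    by (simp add: D_def mult_left_mono)
qed

lemma nn_integral_PiM_insert2:
  fixes F :: "('a \<Rightarrow> real) \<Rightarrow> ennreal"
  assumes J: "finite J" "i \<notin> J" "j \<notin> J" "i \<noteq> j"
    and [measurable]: "F \<in> borel_measurable (PiM (insert i (insert j J)) (\<lambda>_. lborel))"
  shows "(\<integral>\<^sup>+ f. F f \<partial>PiM (insert i (insert j J)) (\<lambda>_. lborel))
    = (\<integral>\<^sup>+ x. \<integral>\<^sup>+ t. \<integral>\<^sup>+ s. F (x(j := t, i := s)) \<partial>lborel \<partial>lborel \<partial>PiM J (\<lambda>_. lborel))"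
proof -
  have "(\<lambda>(x, s). x(i := s)) \<in> measurable (PiM (insert j J) (\<lambda>_. lborel) \<Otimes>\<^sub>M lborel) (PiM (insert i (insert j J)) (\<lambda>_. lborel))"
    by (rule measurable_add_dim)
  then have inner: "(\<lambda>x. \<integral>\<^sup>+ s. F (x(i := s)) \<partial>lborel) \<in> borel_measurable (PiM (insert j J) (\<lambda>_. lborel))"
    by (intro lborel.borel_measurable_nn_integral) (simp add: split_beta')
  have "(\<integral>\<^sup>+ x. \<integral>\<^sup>+ s. F (x(i := s)) \<partial>lborel \<partial>PiM (insert j J) (\<lambda>_. lborel))
      = (\<integral>\<^sup>+ x. \<integral>\<^sup>+ t. \<integral>\<^sup>+ s. F (x(j := t, i := s)) \<partial>lborel \<partial>lborel \<partial>PiM J (\<lambda>_. lborel))"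
    using J(1,3) inner by (subst lborel_product.product_nn_integral_insert) auto
  moreover have "(\<integral>\<^sup>+ f. F f \<partial>PiM (insert i (insert j J)) (\<lambda>_. lborel))
      = (\<integral>\<^sup>+ x. \<integral>\<^sup>+ s. F (x(i := s)) \<partial>lborel \<partial>PiM (insert j J) (\<lambda>_. lborel))"
    using J by (intro lborel_product.product_nn_integral_insert) auto
  ultimately show ?thesis by simp
qed

lemma nn_integral_gauss_PiM_neg_ln_pow_le:
  assumes I: "finite I" "i \<in> I" "j \<in> I" "i \<noteq> j"
    and p: "p i \<noteq> 0" and det: "p i * q j - p j * q i \<noteq> 0" and \<kappa>: "0 < \<kappa>"
  shows "(\<integral>\<^sup>+ f. ennreal ((\<Prod>l\<in>I. gauss (f l)) *
      neg_ln_pow m (\<kappa> * ((\<Sum>l\<in>I. f l * p l)\<^sup>2 + (\<Sum>l\<in>I. f l * q l)\<^sup>2))) \<partial>PiM I (\<lambda>_. lborel))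
    \<le> ennreal (4 * fact m / (pi * \<kappa> * \<bar>p i * q j - p j * q i\<bar>))"
    (is "?lhs \<le> ennreal ?C")
proof -
  define J where "J = I - {i, j}"
  have IJ: "I = insert i (insert j J)" and J: "finite J" "i \<notin> J" "j \<notin> J"
    using I by (auto simp: J_def)
  define W where "W x = (\<Prod>l\<in>J. gauss (x l))" for x
  define P where "P r s t x = s * r i + t * r j + (\<Sum>l\<in>J. x l * r l)" for r :: "'a \<Rightarrow> real" and s t x
  have upd: "(\<Prod>l\<in>I. gauss ((x(j := t, i := s)) l)) = gauss s * gauss t * W x"
    "(\<Sum>l\<in>I. (x(j := t, i := s)) l * r l) = P r s t x" for x s t r
    using I J by (auto simp: IJ W_def P_def intro!: prod.cong sum.cong)
  have split: "ennreal ((\<Prod>l\<in>I. gauss ((x(j := t, i := s)) l)) * neg_ln_pow m (\<kappa> *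
      ((\<Sum>l\<in>I. (x(j := t, i := s)) l * p l)\<^sup>2 + (\<Sum>l\<in>I. (x(j := t, i := s)) l * q l)\<^sup>2)))
    = ennreal (W x) * ennreal (gauss s * gauss t * neg_ln_pow m (\<kappa> * ((P p s t x)\<^sup>2 + (P q s t x)\<^sup>2)))"
    for x s t
    unfolding upd by (simp add: W_def prod_nonneg ennreal_mult'[symmetric] mult_ac)
  have "?lhs = (\<integral>\<^sup>+ x. \<integral>\<^sup>+ t. \<integral>\<^sup>+ s. ennreal ((\<Prod>l\<in>I. gauss ((x(j := t, i := s)) l)) * neg_ln_pow m (\<kappa> *
      ((\<Sum>l\<in>I. (x(j := t, i := s)) l * p l)\<^sup>2 + (\<Sum>l\<in>I. (x(j := t, i := s)) l * q l)\<^sup>2)))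
      \<partial>lborel \<partial>lborel \<partial>PiM J (\<lambda>_. lborel))"
    unfolding IJ by (rule nn_integral_PiM_insert2) (use I J in auto)
  also have "\<dots> = (\<integral>\<^sup>+ x. \<integral>\<^sup>+ t. \<integral>\<^sup>+ s. ennreal (W x) * ennreal (gauss s * gauss t *
      neg_ln_pow m (\<kappa> * ((P p s t x)\<^sup>2 + (P q s t x)\<^sup>2))) \<partial>lborel \<partial>lborel \<partial>PiM J (\<lambda>_. lborel))"
    by (simp only: split)
  also have "\<dots> \<le> (\<integral>\<^sup>+ x. ennreal (W x) * ennreal ?C \<partial>PiM J (\<lambda>_. lborel))"
  proof (intro nn_integral_mono)
    fix x
    have "(\<integral>\<^sup>+ t. \<integral>\<^sup>+ s. ennreal (gauss s * gauss t *
        neg_ln_pow m (\<kappa> * ((P p s t x)\<^sup>2 + (P q s t x)\<^sup>2))) \<partial>lborel \<partial>lborel) \<le> ennreal ?C"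
      unfolding P_def
      using nn_integral_gauss_pair_neg_ln_pow_le[OF p det \<kappa>,
          where h="\<Sum>l\<in>J. x l * p l" and k="\<Sum>l\<in>J. x l * q l"]
      by (simp add: mult_ac add_ac)
    then show "(\<integral>\<^sup>+ t. \<integral>\<^sup>+ s. ennreal (W x) * ennreal (gauss s * gauss t *
        neg_ln_pow m (\<kappa> * ((P p s t x)\<^sup>2 + (P q s t x)\<^sup>2))) \<partial>lborel \<partial>lborel) \<le> ennreal (W x) * ennreal ?C"
      by (simp add: nn_integral_cmult P_def mult_left_mono)
  qed
  also have "\<dots> = (\<integral>\<^sup>+ x. (\<Prod>l\<in>J. ennreal (gauss (x l))) \<partial>PiM J (\<lambda>_. lborel)) * ennreal ?C"
    by (simp add: nn_integral_multc W_def prod_ennreal)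
  also have "\<dots> = (\<Prod>l\<in>J. \<integral>\<^sup>+ s. ennreal (gauss s) \<partial>lborel) * ennreal ?C"
    using J by (subst lborel_product.product_nn_integral_prod) auto
  also have "\<dots> = ennreal ?C"
    by (simp add: nn_integral_gauss)
  finally show ?thesis .
qed

lemma pow_le_fact_mult_exp:
  fixes x :: real
  assumes "0 \<le> x"
  shows "x ^ m \<le> fact m * exp x"
proof -
  have "sum (\<lambda>n. x ^ n /\<^sub>R fact n) {m} \<le> exp x"
    using assms exp_converges[of x] sum_le_suminf[of "\<lambda>n. x ^ n /\<^sub>R fact n" "{m}"]
    by (auto simp: sums_iff)
  then have "x ^ m / fact m \<le> exp x"
    by (simp add: divide_inverse mult.commute)
  then show ?thesis by (simp add: divide_le_eq mult.commute)
qed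

lemma abs_ln_pow_le:
  assumes "0 \<le> y" "1 \<le> m"
  shows "\<bar>ln y\<bar> ^ m \<le> fact m * y + neg_ln_pow m y"
proof (cases "1 \<le> y")
  case True
  then have "\<bar>ln y\<bar> ^ m \<le> fact m * exp (ln y)"
    using pow_le_fact_mult_exp[of "ln y" m] by simp
  then show ?thesis
    using True by (simp add: add_increasing2)
qed (use assms in \<open>auto simp: neg_ln_pow_def power_0_left\<close>)

lemma nn_integral_gauss_PiM_abs_ln_pow_le:
  assumes I: "finite I" "i \<in> I" "j \<in> I" "i \<noteq> j"
    and p: "p i \<noteq> 0" and det: "p i * q j - p j * q i \<noteq> 0" and \<kappa>: "0 < \<kappa>" and m: "1 \<le> m"
  shows "(\<integral>\<^sup>+ f. ennreal ((\<Prod>l\<in>I. gauss (f l)) *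
      \<bar>ln (\<kappa> * ((\<Sum>l\<in>I. f l * p l)\<^sup>2 + (\<Sum>l\<in>I. f l * q l)\<^sup>2))\<bar> ^ m) \<partial>PiM I (\<lambda>_. lborel))
    \<le> ennreal (fact m * \<kappa> * ((\<Sum>l\<in>I. (p l)\<^sup>2) + (\<Sum>l\<in>I. (q l)\<^sup>2)) / 2
      + 4 * fact m / (pi * \<kappa> * \<bar>p i * q j - p j * q i\<bar>))"
proof -
  define P where "P f = (\<Sum>l\<in>I. f l * p l)" for f
  define Q where "Q f = (\<Sum>l\<in>I. f l * q l)" for f
  define W where "W f = (\<Prod>l\<in>I. gauss (f l))" for f
  define c where "c = fact m * \<kappa>"
  define C where "C = 4 * fact m / (pi * \<kappa> * \<bar>p i * q j - p j * q i\<bar>)"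
  have W: "0 \<le> W f" for f
    unfolding W_def by (simp add: prod_nonneg)
  have c: "0 \<le> c" using \<kappa> by (simp add: c_def)
  have [measurable]: "P \<in> borel_measurable (PiM I (\<lambda>_. lborel))" "Q \<in> borel_measurable (PiM I (\<lambda>_. lborel))"
    "W \<in> borel_measurable (PiM I (\<lambda>_. lborel))"
    unfolding P_def Q_def W_def by measurable
  have "ennreal (W f * \<bar>ln (\<kappa> * ((P f)\<^sup>2 + (Q f)\<^sup>2))\<bar> ^ m)
      \<le> ennreal c * ennreal (W f * (0 + P f)\<^sup>2) + ennreal c * ennreal (W f * (0 + Q f)\<^sup>2)
        + ennreal (W f * neg_ln_pow m (\<kappa> * ((P f)\<^sup>2 + (Q f)\<^sup>2)))" for f
  proof -
    have "W f * \<bar>ln (\<kappa> * ((P f)\<^sup>2 + (Q f)\<^sup>2))\<bar> ^ m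
        \<le> W f * (fact m * (\<kappa> * ((P f)\<^sup>2 + (Q f)\<^sup>2)) + neg_ln_pow m (\<kappa> * ((P f)\<^sup>2 + (Q f)\<^sup>2)))"
      using \<kappa> m by (intro mult_left_mono abs_ln_pow_le W) auto
    also have "\<dots> = c * (W f * (0 + P f)\<^sup>2) + c * (W f * (0 + Q f)\<^sup>2)
        + W f * neg_ln_pow m (\<kappa> * ((P f)\<^sup>2 + (Q f)\<^sup>2))"
      by (simp add: c_def algebra_simps)
    finally show ?thesis
      using c W by (simp add: ennreal_mult'[symmetric] flip: ennreal_plus)
  qed
  then have "(\<integral>\<^sup>+ f. ennreal (W f * \<bar>ln (\<kappa> * ((P f)\<^sup>2 + (Q f)\<^sup>2))\<bar> ^ m) \<partial>PiM I (\<lambda>_. lborel))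
      \<le> ennreal c * (\<integral>\<^sup>+ f. ennreal (W f * (0 + P f)\<^sup>2) \<partial>PiM I (\<lambda>_. lborel))
        + ennreal c * (\<integral>\<^sup>+ f. ennreal (W f * (0 + Q f)\<^sup>2) \<partial>PiM I (\<lambda>_. lborel))
        + (\<integral>\<^sup>+ f. ennreal (W f * neg_ln_pow m (\<kappa> * ((P f)\<^sup>2 + (Q f)\<^sup>2))) \<partial>PiM I (\<lambda>_. lborel))"
    by (subst nn_integral_cmult[symmetric] nn_integral_add[symmetric], measurable)+
       (intro nn_integral_mono)
  also have "\<dots> \<le> ennreal c * ennreal ((\<Sum>l\<in>I. (p l)\<^sup>2) / 2) + ennreal c * ennreal ((\<Sum>l\<in>I. (q l)\<^sup>2) / 2)
      + ennreal C"
    unfolding W_def P_def Q_def C_def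
    using nn_integral_gauss_PiM_affine_sq[OF I(1), where c=0]
      nn_integral_gauss_PiM_neg_ln_pow_le[OF I p det \<kappa>, of m]
    by (intro add_mono) auto
  also have "\<dots> = ennreal (c * ((\<Sum>l\<in>I. (p l)\<^sup>2) + (\<Sum>l\<in>I. (q l)\<^sup>2)) / 2 + C)"
    using c \<kappa> by (simp add: C_def sum_nonneg ennreal_mult'[symmetric] add_divide_distrib
        distrib_left flip: ennreal_plus)
  finally show ?thesis
    by (simp add: P_def Q_def W_def c_def C_def)
qed

lemma lagrange_identity:
  fixes p q :: "'b \<Rightarrow> real"
  assumes "finite B"
  shows "(\<Sum>b\<in>B. \<Sum>b'\<in>B. (p b * q b' - p b' * q b)\<^sup>2)
     = 2 * ((\<Sum>b\<in>B. (p b)\<^sup>2) * (\<Sum>b\<in>B. (q b)\<^sup>2) - (\<Sum>b\<in>B. p b * q b)\<^sup>2)"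
proof -
  have e: "(p b * q b' - p b' * q b)\<^sup>2 = (p b)\<^sup>2 * (q b')\<^sup>2 + (q b)\<^sup>2 * (p b')\<^sup>2 - 2 * ((p b * q b) * (p b' * q b'))" for b b'
    by (simp add: power2_eq_square algebra_simps)
  have "(\<Sum>b\<in>B. \<Sum>b'\<in>B. (p b * q b' - p b' * q b)\<^sup>2)
      = (\<Sum>b\<in>B. \<Sum>b'\<in>B. (p b)\<^sup>2 * (q b')\<^sup>2) + (\<Sum>b\<in>B. \<Sum>b'\<in>B. (q b)\<^sup>2 * (p b')\<^sup>2)
        - 2 * (\<Sum>b\<in>B. \<Sum>b'\<in>B. (p b * q b) * (p b' * q b'))"
    unfolding e by (simp add: sum.distrib sum_subtractf sum_distrib_left)
  also have "\<dots> = (\<Sum>b\<in>B. (p b)\<^sup>2) * (\<Sum>b\<in>B. (q b)\<^sup>2) + (\<Sum>b\<in>B. (q b)\<^sup>2) * (\<Sum>b\<in>B. (p b)\<^sup>2)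
      - 2 * ((\<Sum>b\<in>B. p b * q b) * (\<Sum>b\<in>B. p b * q b))"
    by (simp only: sum_product)
  finally show ?thesis by (simp add: power2_eq_square algebra_simps)
qed

lemma exists_large_minor:
  fixes p q :: "'b \<Rightarrow> real"
  assumes B: "finite B"
    and gram: "0 < (\<Sum>b\<in>B. (p b)\<^sup>2) * (\<Sum>b\<in>B. (q b)\<^sup>2) - (\<Sum>b\<in>B. p b * q b)\<^sup>2" (is "0 < ?G")
  obtains i j where "i \<in> B" "j \<in> B" "i \<noteq> j" "p i \<noteq> 0" "p i * q j - p j * q i \<noteq> 0"
    "2 * ((\<Sum>b\<in>B. (p b)\<^sup>2) * (\<Sum>b\<in>B. (q b)\<^sup>2) - (\<Sum>b\<in>B. p b * q b)\<^sup>2)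
      \<le> (real (card B))\<^sup>2 * (p i * q j - p j * q i)\<^sup>2"
proof -
  define D where "D b b' = p b * q b' - p b' * q b" for b b'
  define S where "S = (\<lambda>(b, b'). (D b b')\<^sup>2) ` (B \<times> B)"
  have "B \<noteq> {}" using gram by auto
  then have "Max S \<in> S" using B by (simp add: S_def)
  then obtain i j where ij: "i \<in> B" "j \<in> B" "Max S = (D i j)\<^sup>2" by (auto simp: S_def)
  have "(D b b')\<^sup>2 \<le> (D i j)\<^sup>2" if "b \<in> B" "b' \<in> B" for b b'
    using B that by (subst ij(3)[symmetric], intro Max_ge) (auto simp: S_def)
  then have "(\<Sum>b\<in>B. \<Sum>b'\<in>B. (D b b')\<^sup>2) \<le> (\<Sum>b\<in>B. \<Sum>b'\<in>B. (D i j)\<^sup>2)"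
    by (intro sum_mono) auto
  then have large: "2 * ?G \<le> (real (card B))\<^sup>2 * (D i j)\<^sup>2"
    using lagrange_identity[OF B, of p q] by (simp add: D_def power2_eq_square)
  then have "D i j \<noteq> 0" using gram by auto
  then have "i \<noteq> j" by (auto simp: D_def)
  show ?thesis
  proof (cases "p i = 0")
    case False
    then show ?thesis using that ij \<open>i \<noteq> j\<close> \<open>D i j \<noteq> 0\<close> large by (simp add: D_def)
  next
    case True
    then have "p j \<noteq> 0" using \<open>D i j \<noteq> 0\<close> by (auto simp: D_def)
    moreover have "(D j i)\<^sup>2 = (D i j)\<^sup>2" "D j i \<noteq> 0"
      using \<open>D i j \<noteq> 0\<close> by (auto simp: D_def power2_eq_square algebra_simps)
    ultimately show ?thesis using that ij \<open>i \<noteq> j\<close> large by (simp add: D_def)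
  qed
qed


lemma moment_bound_arith:
  fixes n S T G D :: real
  assumes S: "0 < S" and T: "0 \<le> T" and ST: "S\<^sup>2 - T\<^sup>2 = 4 * G" and G: "0 < G"
    and GD: "2 * G \<le> n\<^sup>2 * D\<^sup>2" and D: "0 < D" and n: "1 \<le> n"
  shows "n / 2 + 4 * S / (pi * n * D) \<le> 4 * n / (1 - T / S)"
proof -
  define u where "u = S - T"
  have "T\<^sup>2 < S\<^sup>2" using ST G by simp
  then have "T < S" using S by (simp add: power_less_imp_less_base)
  then have u: "0 < u" "u \<le> S" using T by (auto simp: u_def)
  have "u\<^sup>2 \<le> u * (S + T)"
    using u T by (simp add: power2_eq_square u_def mult_left_mono)
  also have "u * (S + T) = 4 * G"
    using ST by (simp add: u_def power2_eq_square algebra_simps)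
  also have "4 * G \<le> (2 * n * D)\<^sup>2"
    using GD G by (simp add: power_mult_distrib)
  finally have "u\<^sup>2 \<le> (2 * n * D)\<^sup>2" .
  moreover have "0 \<le> 2 * n * D"
    using n D by simp
  ultimately have uD: "u \<le> 2 * n * D"
    by (rule power2_le_imp_le)
  have "4 * S / (pi * n * D) = (4 * S / pi) / (n * D)"
    by simp
  also have "\<dots> \<le> (4 * S / pi) / (u / 2)"
    using uD u S by (intro divide_left_mono) simp_all
  also have "\<dots> = (8 / pi) * (S / u)"
    by simp
  also have "\<dots> \<le> 3 * (n * S / u)"
  proof (rule mult_mono)
    show "8 / pi \<le> 3" using pi_gt3 by (simp add: divide_le_eq)
    show "S / u \<le> n * S / u" using n S u by (simp add: divide_right_mono)
  qed (use S u in simp_all)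
  finally have "4 * S / (pi * n * D) \<le> 3 * (n * S / u)" .
  moreover have "n \<le> n * S / u"
    using n u by (simp add: le_divide_eq)
  moreover have "1 - T / S = u / S"
    using S by (simp add: u_def diff_divide_distrib)
  then have "4 * n / (1 - T / S) = 4 * (n * S / u)"
    by simp
  moreover have "0 \<le> n * S / u"
    using n S u by simp
  ultimately show ?thesis by linarith
qed

definition Re_vec :: "complex^'n \<Rightarrow> real^'n" where
  "Re_vec z = (\<chi> i. Re (z$i))"

definition Im_vec :: "complex^'n \<Rightarrow> real^'n" where
  "Im_vec z = (\<chi> i. Im (z$i))"

lemma norm_square_eq_Re_Im: "(norm z)\<^sup>2 = Re_vec z \<bullet> Re_vec z + Im_vec z \<bullet> Im_vec z"
  by (simp add: power2_norm_eq_inner inner_vec_def inner_complex_def sum.distrib Re_vec_def Im_vec_def)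

lemma cmod_lin_form_square:
  "(cmod (lin_form a z))\<^sup>2 = real CARD('n) * ((a \<bullet> Re_vec z)\<^sup>2 + (a \<bullet> Im_vec z)\<^sup>2)"
  for a :: "real^'n"
proof -
  have "Re (lin_form a z) = sqrt (real CARD('n)) * (a \<bullet> Re_vec z)"
    "Im (lin_form a z) = sqrt (real CARD('n)) * (a \<bullet> Im_vec z)"
    by (simp_all add: lin_form_def inner_vec_def Re_vec_def Im_vec_def sum_distrib_left mult_ac)
  then show ?thesis
    unfolding cmod_power2 by (simp add: power_mult_distrib algebra_simps)
qed

lemma norm_pow4_minus_cmod_sum_squares:
  "((norm z)\<^sup>2)\<^sup>2 - (cmod (\<Sum>i\<in>UNIV. (z$i)\<^sup>2))\<^sup>2
    = 4 * ((Re_vec z \<bullet> Re_vec z) * (Im_vec z \<bullet> Im_vec z) - (Re_vec z \<bullet> Im_vec z)\<^sup>2)"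
proof -
  have "Re (\<Sum>i\<in>UNIV. (z$i)\<^sup>2) = Re_vec z \<bullet> Re_vec z - Im_vec z \<bullet> Im_vec z"
    "Im (\<Sum>i\<in>UNIV. (z$i)\<^sup>2) = 2 * (Re_vec z \<bullet> Im_vec z)"
    by (simp_all add: Re_sum Im_sum inner_vec_def Re_vec_def Im_vec_def power2_eq_square
        sum_subtractf sum_distrib_left mult_ac)
  then have "(cmod (\<Sum>i\<in>UNIV. (z$i)\<^sup>2))\<^sup>2
      = (Re_vec z \<bullet> Re_vec z - Im_vec z \<bullet> Im_vec z)\<^sup>2 + 4 * (Re_vec z \<bullet> Im_vec z)\<^sup>2"
    unfolding cmod_power2 by (simp add: power_mult_distrib)
  then show ?thesis
    unfolding norm_square_eq_Re_Im by (simp add: power2_eq_square algebra_simps)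
qed

lemma gram_Re_Im_pos:
  assumes "\<not> real_point z"
  shows "0 < (Re_vec z \<bullet> Re_vec z) * (Im_vec z \<bullet> Im_vec z) - (Re_vec z \<bullet> Im_vec z)\<^sup>2"
proof (rule ccontr)
  define x y where "x = Re_vec z" and "y = Im_vec z"
  have z: "z = (\<chi> i. Complex (x$i) (y$i))"
    by (simp add: vec_eq_iff x_def y_def Re_vec_def Im_vec_def complex_eq_iff)
  assume "\<not> ?thesis"
  then have "(x \<bullet> y)\<^sup>2 = (norm x * norm y)\<^sup>2"
    using Cauchy_Schwarz_ineq[of x y] by (simp add: x_def y_def power_mult_distrib power2_norm_eq_inner)
  then have "\<bar>x \<bullet> y\<bar> = norm x * norm y"
    using power2_eq_iff_nonneg[of "\<bar>x \<bullet> y\<bar>" "norm x * norm y"] by simp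
  then have "x = 0 \<or> (\<exists>c. y = c *\<^sub>R x)"
    unfolding norm_cauchy_schwarz_equal collinear_lemma by auto
  then have "real_point z"
  proof
    assume "x = 0"
    then have "z = \<i> *s (\<chi> i. complex_of_real (y$i))"
      by (simp add: z vec_eq_iff complex_eq_iff)
    then show ?thesis unfolding real_point_def by blast
  next
    assume "\<exists>c. y = c *\<^sub>R x"
    then obtain c where "y = c *\<^sub>R x" ..
    then have "z = Complex 1 c *s (\<chi> i. complex_of_real (x$i))"
      by (simp add: z vec_eq_iff complex_eq_iff)
    then show ?thesis unfolding real_point_def by blast
  qed
  with assms show False ..
qed

lemma gauss_density_eq_prod: "gauss_density a = (\<Prod>b\<in>Basis. gauss (a \<bullet> b))"
  for a :: "real^'n"
proof -
  have "(norm a)\<^sup>2 = (\<Sum>b\<in>Basis. (a \<bullet> b)\<^sup>2)"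
    unfolding power2_norm_eq_inner by (subst euclidean_inner) (simp add: power2_eq_square)
  then have "exp (- (norm a)\<^sup>2) = (\<Prod>b\<in>Basis. exp (- (a \<bullet> b)\<^sup>2))"
    by (simp add: exp_sum[symmetric] sum_negf)
  moreover have "pi powr (- (real CARD('n) / 2)) = 1 / sqrt pi ^ CARD('n)"
    by (simp add: powr_minus_divide powr_half_sqrt[symmetric] powr_realpow[symmetric] powr_powr)
  ultimately show ?thesis
    by (simp add: gauss_density_def gauss_def prod_dividef)
qed

lemma M_CP_eq_nn_integral_PiM:
  fixes z :: "complex^'n"
  shows "M_CP m z = (\<integral>\<^sup>+ f. ennreal ((\<Prod>b\<in>Basis. gauss (f b)) *
     \<bar>ln ((real CARD('n) / (norm z)\<^sup>2) * ((\<Sum>b\<in>Basis. f b * (b \<bullet> Re_vec z))\<^sup>2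
       + (\<Sum>b\<in>Basis. f b * (b \<bullet> Im_vec z))\<^sup>2))\<bar> ^ m) \<partial>PiM Basis (\<lambda>_. lborel))"
    (is "_ = ?rhs")
proof -
  define G where "G a = ennreal ((\<Prod>b\<in>Basis. gauss (a \<bullet> b)) *
    \<bar>ln ((real CARD('n) / (norm z)\<^sup>2) * ((a \<bullet> Re_vec z)\<^sup>2 + (a \<bullet> Im_vec z)\<^sup>2))\<bar> ^ m)" for a :: "real^'n"
  have [measurable]: "G \<in> borel_measurable borel"
    unfolding G_def by measurable
  have "M_CP m z = (\<integral>\<^sup>+ a. G a \<partial>lborel)"
    unfolding M_CP_def G_def sec_norm_def
    by (simp add: power_divide cmod_lin_form_square gauss_density_eq_prod)
  also have "\<dots> = (\<integral>\<^sup>+ f. G (\<Sum>b\<in>Basis. f b *\<^sub>R b) \<partial>PiM Basis (\<lambda>_. lborel))"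
    by (subst lborel_eq) (rule nn_integral_distr; measurable)
  also have "\<dots> = ?rhs"
    by (simp add: G_def inner_sum_left inner_Basis if_distrib[of "\<lambda>x. _ * x"] sum.delta'
        cong: if_cong)
  finally show ?thesis .
qed

lemma sum_Basis_inner_mult: "(\<Sum>b\<in>Basis. (b \<bullet> x) * (b \<bullet> y)) = x \<bullet> y"
  by (simp add: euclidean_inner[of x y] inner_commute)

lemma sum_Basis_inner_square: "(\<Sum>b\<in>Basis. (b \<bullet> x)\<^sup>2) = x \<bullet> x"
  using sum_Basis_inner_mult[of x x] by (simp add: power2_eq_square)

theorem proposition1p1:
  fixes z :: "complex^'n" and m :: nat
  assumes "CARD('n) \<ge> 2"
    and "m \<ge> 1"
    and "z \<noteq> 0"
    and "\<not> real_point z"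
  shows "M_CP m z \<le> ennreal (4 * fact m * real CARD('n) / (1 - tau_norm z))"
proof -
  define x y where "x = Re_vec z" and "y = Im_vec z"
  define p q where "p b = b \<bullet> x" and "q b = b \<bullet> y" for b :: "real^'n"
  define n S T where "n = real CARD('n)" and "S = (norm z)\<^sup>2" and "T = cmod (\<Sum>i\<in>UNIV. (z$i)\<^sup>2)"
  define G where "G = (x \<bullet> x) * (y \<bullet> y) - (x \<bullet> y)\<^sup>2"
  have S: "0 < S" "(\<Sum>b\<in>Basis. (p b)\<^sup>2) + (\<Sum>b\<in>Basis. (q b)\<^sup>2) = S"
    using assms(3) by (simp_all add: S_def p_def q_def x_def y_def sum_Basis_inner_square)
      (simp add: norm_square_eq_Re_Im)
  have G: "0 < G" and ST: "S\<^sup>2 - T\<^sup>2 = 4 * G"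
    using gram_Re_Im_pos[OF assms(4)] norm_pow4_minus_cmod_sum_squares[of z]
    by (simp_all add: G_def S_def T_def x_def y_def)
  obtain i j where ij: "i \<in> Basis" "j \<in> Basis" "i \<noteq> j" "p i \<noteq> 0" "p i * q j - p j * q i \<noteq> 0"
    and large: "2 * G \<le> n\<^sup>2 * (p i * q j - p j * q i)\<^sup>2"
    using exists_large_minor[OF finite_Basis, of p q] G
    by (auto simp: G_def n_def p_def q_def sum_Basis_inner_mult sum_Basis_inner_square)
  have "M_CP m z = (\<integral>\<^sup>+ f. ennreal ((\<Prod>b\<in>Basis. gauss (f b)) *
      \<bar>ln ((n / S) * ((\<Sum>b\<in>Basis. f b * p b)\<^sup>2 + (\<Sum>b\<in>Basis. f b * q b)\<^sup>2))\<bar> ^ m) \<partial>PiM Basis (\<lambda>_. lborel))"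
    unfolding n_def S_def p_def q_def x_def y_def by (rule M_CP_eq_nn_integral_PiM)
  also have "\<dots> \<le> ennreal (fact m * (n / S) * ((\<Sum>b\<in>Basis. (p b)\<^sup>2) + (\<Sum>b\<in>Basis. (q b)\<^sup>2)) / 2
      + 4 * fact m / (pi * (n / S) * \<bar>p i * q j - p j * q i\<bar>))"
    using S assms(2) by (intro nn_integral_gauss_PiM_abs_ln_pow_le[OF finite_Basis ij]) (auto simp: n_def)
  also have "\<dots> = ennreal (fact m * (n / 2 + 4 * S / (pi * n * \<bar>p i * q j - p j * q i\<bar>)))"
    using S by (simp add: field_simps)
  also have "\<dots> \<le> ennreal (fact m * (4 * n / (1 - T / S)))"
    using S(1) G ST large ij(5)
    by (intro ennreal_leI mult_left_mono moment_bound_arith) (auto simp: n_def T_def)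
  also have "T / S = tau_norm z"
    by (simp add: tau_norm_def T_def S_def)
  finally show ?thesis by (simp add: n_def mult_ac)
qed

end
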